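(* Let $q$ be a prime power and use the setting of the context. Then the code $\mathcal C=\bigcup_{i=0}^{q^2+q}\mathcal G_i$ is an orbit code: there is a subgroup of ${\rm PGL}(6,q)$ of order $(q^3-1)(q^2+q+1)$ leaving $\mathcal C$ invariant and acting transitively on its planes.
   Context: In ${\rm PG}(5,q)$ points are row vectors ${\bf X}=(X_1,\dots,X_6)$ with matrices acting on the right; write $X=(X_1,X_2,X_3)$, $Y=(X_4,X_5,X_6)$. Let $\pi_1$ be the plane $X_1=X_2=X_3=0$ and $\pi_2$ the plane $X_4=X_5=X_6=0$. Let $A$ be a Singer cycle of ${\rm GL}(3,q)$ (a $3\times3$ matrix of multiplicative order $q^3-1$). For $0\le i\le q^2+q$ let $\mathcal Q_i$ be the quadric with quadratic form $XA^iY^T$; each is a non-degenerate hyperbolic quadric containing $\pi_1,\pi_2$. Its planes fall into two classes (planes in the same class meet in one point), with $\pi_1,\pi_2$ in different classes. $\mathcal G_i$ is the set of the $q^3-1$ planes of $\mathcal Q_i$ in the class of $\pi_1$, distinct from $\pi_1$ and disjoint from $\pi_2$. An orbit code is a constant-dimension code admitting an automorphism group (a group of collineations preserving it) whose members form a single orbit under that group. *)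

theory Defs
  imports "HOL-Analysis.Analysis" "HOL-Algebra.Group"
begin

text \<open>The ambient space GF(q)^6 is modelled as row vectors of type 'a^(3+3); the coordinate
  Inl j is X_(j+1) and Inr j is X_(j+4), so X = (X_1,X_2,X_3) and Y = (X_4,X_5,X_6).
  Projective subspaces of PG(5,q) are vector subspaces of this space.\<close>

definition xpart :: "'a^(3+3) \<Rightarrow> 'a^3" where
  "xpart v = (\<chi> j. v $ Inl j)"

definition ypart :: "'a^(3+3) \<Rightarrow> 'a^3" where
  "ypart v = (\<chi> j. v $ Inr j)"

definition mpow :: "'a::semiring_1^'n^'n \<Rightarrow> nat \<Rightarrow> 'a^'n^'n" where
  "mpow A i = ((\<lambda>M. M ** A) ^^ i) (mat 1)"

definition singer_cycle :: "'a::{finite,field}^3^3 \<Rightarrow> bool" where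
  "singer_cycle A \<longleftrightarrow> invertible A \<and> mpow A (CARD('a)^3 - 1) = mat 1 \<and>
     (\<forall>k. 0 < k \<and> k < CARD('a)^3 - 1 \<longrightarrow> mpow A k \<noteq> mat 1)"

definition quad_form :: "'a::field^3^3 \<Rightarrow> nat \<Rightarrow> 'a^(3+3) \<Rightarrow> 'a" where
  "quad_form A i v = (\<Sum>j\<in>UNIV. \<Sum>k\<in>UNIV. xpart v $ j * mpow A i $ j $ k * ypart v $ k)"

definition pg_point :: "('a::field^(3+3)) set \<Rightarrow> bool" where
  "pg_point S \<longleftrightarrow> vec.subspace S \<and> vec.dim S = 1"

definition pg_plane :: "('a::field^(3+3)) set \<Rightarrow> bool" where
  "pg_plane S \<longleftrightarrow> vec.subspace S \<and> vec.dim S = 3"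

definition pi1 :: "('a::field^(3+3)) set" where
  "pi1 = {v. xpart v = 0}"

definition pi2 :: "('a::field^(3+3)) set" where
  "pi2 = {v. ypart v = 0}"

definition quadric_planes :: "'a::field^3^3 \<Rightarrow> nat \<Rightarrow> ('a^(3+3)) set set" where
  "quadric_planes A i = {S. pg_plane S \<and> (\<forall>v\<in>S. quad_form A i v = 0)}"

definition same_class :: "('a::field^(3+3)) set \<Rightarrow> ('a^(3+3)) set \<Rightarrow> bool" where
  "same_class S T \<longleftrightarrow> S = T \<or> pg_point (S \<inter> T)"

definition G_set :: "'a::field^3^3 \<Rightarrow> nat \<Rightarrow> ('a^(3+3)) set set" where
  "G_set A i = {S \<in> quadric_planes A i. same_class S pi1 \<and> S \<noteq> pi1 \<and> S \<inter> pi2 = {0}}"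

definition orbit_code_C :: "'a::{finite,field}^3^3 \<Rightarrow> ('a^(3+3)) set set" where
  "orbit_code_C A = (\<Union>i\<in>{0..CARD('a)^2 + CARD('a)}. G_set A i)"

definition proj_class :: "'a::field^(3+3)^(3+3) \<Rightarrow> ('a^(3+3)^(3+3)) set" where
  "proj_class M = {mat c ** M | c. c \<noteq> 0}"

definition PGL6 :: "('a::field^(3+3)^(3+3)) set monoid" where
  "PGL6 = \<lparr>carrier = proj_class ` {M. invertible M},
           mult = (\<lambda>X Y. {M ** N | M N. M \<in> X \<and> N \<in> Y}),
           one = proj_class (mat 1)\<rparr>"

text \<open>Action of a collineation (matrices act on the right of row vectors) on a subspace.\<close>
definition pgl_act :: "('a::field^(3+3)^(3+3)) set \<Rightarrow> ('a^(3+3)) set \<Rightarrow> ('a^(3+3)) set" where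
  "pgl_act X S = {v v* M | v M. v \<in> S \<and> M \<in> X}"

end

theory Submission
  imports Defs "HOL-Number_Theory.Cong"
begin

text \<open>The matrices \<open>c\<^sub>0 + c\<^sub>1 A + c\<^sub>2 A\<^sup>2\<close> form a set of \<open>q\<^sup>3\<close> matrices that is closed under
  multiplication by \<open>A\<close> (Cayley--Hamilton), so its nonzero elements are exactly the \<open>q\<^sup>3 - 1\<close>
  distinct powers of \<open>A\<close>. Hence every nonzero scalar matrix is a power of \<open>A\<close>, \<open>A\<^sup>t\<close> is scalar iff
  \<open>q\<^sup>2 + q + 1\<close> divides \<open>t\<close>, and the powers of \<open>A\<close> act transitively on nonzero vectors.

  The collineations \<open>(X, Y) \<mapsto> (X A\<^sup>a, Y (A\<^sup>b)\<^sup>T)\<close> fix \<open>\<pi>\<^sub>1\<close> and \<open>\<pi>\<^sub>2\<close> and map \<open>\<Q>\<^sub>a\<^sub>+\<^sub>i\<^sub>+\<^sub>b\<close>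
  to \<open>\<Q>\<^sub>i\<close>. Since \<open>\<Q>\<^sub>i\<close> only depends on \<open>i\<close> modulo \<open>q\<^sup>2 + q + 1\<close>, they permute \<open>\<C>\<close>, and modulo
  scalars they form a group of order \<open>(q\<^sup>3 - 1)(q\<^sup>2 + q + 1)\<close>.

  A plane of \<open>\<G>\<^sub>i\<close> is the graph \<open>{(Y C, Y)}\<close> of a matrix \<open>C\<close> with \<open>C A\<^sup>i\<close> alternating, and a
  nonzero alternating \<open>3 \<times> 3\<close> matrix is determined up to a scalar by its kernel. Moving the kernel
  with \<open>A\<^sup>b\<close> and absorbing the scalar into \<open>A\<^sup>a\<close> maps any plane of \<open>\<C>\<close> onto any other.\<close>

section \<open>Matrix powers and scalar matrices\<close>

lemma mpow_0 [simp]: "mpow A 0 = mat 1"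
  by (simp add: mpow_def)

lemma mpow_Suc: "mpow A (Suc i) = mpow A i ** A"
  by (simp add: mpow_def)

lemma mpow_add: "mpow A (i + j) = mpow A i ** mpow A j"
  by (induction j) (simp_all add: mpow_Suc matrix_mul_assoc)

lemma mpow_commute: "mpow A i ** mpow A j = mpow A j ** mpow A i"
  by (metis add.commute mpow_add)

lemma mpow_mult: "mpow A (i * j) = mpow (mpow A i) j"
proof (induction j)
  case (Suc j)
  have "mpow A (i * Suc j) = mpow A (i * j + i)"
    by (simp add: add.commute)
  then show ?case
    using Suc by (simp add: mpow_add mpow_Suc)
qed simp

lemma mat_mult_nth: "(mat c ** M) $ i $ j = c * M $ i $ j"
  by (simp add: matrix_matrix_mult_def mat_def if_distrib if_distribR cong: if_cong)

lemma mat_commute: "M ** mat c = mat c ** (M::'a::comm_semiring_1^'n^'n)"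
  by (simp add: vec_eq_iff mat_mult_nth matrix_matrix_mult_def mat_def if_distrib if_distribR
      mult.commute cong: if_cong)

lemma mat_mult_mat: "mat c ** mat d = mat (c * d :: 'a::comm_semiring_1)"
  by (simp add: vec_eq_iff mat_mult_nth) (simp add: mat_def)

lemma mpow_mat: "mpow (mat c) k = (mat (c ^ k) :: 'a::comm_semiring_1^'n^'n)"
  by (induction k) (simp_all add: mpow_Suc mat_mult_mat mult.commute)

lemma mat_nth_diag [simp]: "mat c $ i $ i = c"
  by (simp add: mat_def)

lemma mat_inject: "mat c = mat d \<longleftrightarrow> c = d"
  by (metis mat_nth_diag)

lemma vector_matrix_mult_mat: "x v* mat c = c *s (x :: 'a::comm_semiring_1^'n)"
  by (simp add: vec_eq_iff vector_matrix_mult_def mat_def if_distrib if_distribR mult.commute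
      cong: if_cong)

lemma mat_inverse_cancel: "c \<noteq> 0 \<Longrightarrow> mat (inverse c) ** (mat c ** M) = (M::'a::field^'n^'n)"
  by (simp add: matrix_mul_assoc mat_mult_mat)

lemma invertible_nonzero: "invertible (M::'a::field^'n^'n) \<Longrightarrow> M \<noteq> 0"
  by (metis invertible_def mat_0 mat_inject times0_left zero_neq_one)

lemma invertible_right_cancel: "invertible P \<Longrightarrow> X ** P = Y ** P \<Longrightarrow> X = (Y::'a::field^'n^'n)"
  by (metis invertible_def matrix_mul_assoc matrix_mul_rid)

lemma invertible_left_cancel: "invertible P \<Longrightarrow> P ** X = P ** Y \<Longrightarrow> X = (Y::'a::field^'n^'n)"
  by (metis invertible_def matrix_mul_assoc matrix_mul_lid)

lemma invertible_transpose: "invertible (M::'a::comm_semiring_1^'n^'n) \<Longrightarrow> invertible (transpose M)"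
  unfolding invertible_def by (metis matrix_transpose_mul transpose_mat)

definition is_scalar :: "'a::zero^'n^'n \<Rightarrow> bool" where
  "is_scalar M \<longleftrightarrow> (\<exists>c. M = mat c)"

section \<open>Quadratic polynomials in a \<open>3 \<times> 3\<close> matrix\<close>

definition matrix_poly2 :: "'a::comm_ring_1^3^3 \<Rightarrow> 'a \<times> 'a \<times> 'a \<Rightarrow> 'a^3^3" where
  "matrix_poly2 M = (\<lambda>(c0, c1, c2). mat c0 + mat c1 ** M + mat c2 ** (M ** M))"

lemma matrix_poly2_zero [simp]: "matrix_poly2 M (0, 0, 0) = 0"
  by (simp add: matrix_poly2_def)

lemma matrix_poly2_diff:
  "matrix_poly2 M (a0, a1, a2) - matrix_poly2 M (b0, b1, b2) = matrix_poly2 M (a0 - b0, a1 - b1, a2 - b2)"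
  by (simp add: matrix_poly2_def vec_eq_iff mat_mult_nth) (simp add: mat_def algebra_simps)

lemma matrix_poly2_mult_closed: "\<exists>c'. M ** matrix_poly2 M c = matrix_poly2 M c'"
proof -
  obtain c0 c1 c2 where c: "c = (c0, c1, c2)"
    by (cases c) auto
  define t where "t = M$1$1 + M$2$2 + M$3$3"
  define s where "s = M$1$1*M$2$2 - M$1$2*M$2$1 + M$1$1*M$3$3 - M$1$3*M$3$1 + M$2$2*M$3$3 - M$2$3*M$3$2"
  define d where "d = M$1$1*(M$2$2*M$3$3 - M$2$3*M$3$2) - M$1$2*(M$2$1*M$3$3 - M$2$3*M$3$1)
    + M$1$3*(M$2$1*M$3$2 - M$2$2*M$3$1)"
  \<comment> \<open>Cayley--Hamilton: \<open>t\<close>, \<open>s\<close>, \<open>d\<close> are the coefficients of the characteristic polynomial\<close>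
  have "M ** matrix_poly2 M (c0, c1, c2) = matrix_poly2 M (c2 * d, c0 - c2 * s, c1 + c2 * t)"
    unfolding vec_eq_iff forall_3 matrix_poly2_def t_def s_def d_def
    by (simp add: mat_mult_nth matrix_matrix_mult_def sum_3) (simp add: mat_def algebra_simps)
  then show ?thesis
    unfolding c by blast
qed

lemma mpow_in_range_matrix_poly2: "mpow M k \<in> range (matrix_poly2 M)"
proof (induction k)
  case 0
  have "mpow M 0 = matrix_poly2 M (1, 0, 0)"
    by (simp add: matrix_poly2_def)
  then show ?case
    by blast
next
  case (Suc k)
  then obtain c where "mpow M k = matrix_poly2 M c"
    by blast
  moreover have "mpow M (Suc k) = M ** mpow M k"
    using mpow_commute[of M k 1] by (simp add: mpow_Suc)
  ultimately show ?case
    using matrix_poly2_mult_closed by (metis rangeI)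
qed

section \<open>Singer cycles\<close>

lemma closed_add_diff_imp_multiples:
  fixes P :: "nat \<Rightarrow> bool"
  assumes "0 < N" "P N"
    and add: "\<And>t u. P t \<Longrightarrow> P u \<Longrightarrow> P (t + u)"
    and diff: "\<And>t u. P t \<Longrightarrow> P (t + u) \<Longrightarrow> P u"
  shows "\<exists>d>0. \<forall>t. P t \<longleftrightarrow> d dvd t"
proof -
  define d where "d = (LEAST t. 0 < t \<and> P t)"
  have d: "0 < d" "P d"
    using LeastI[of "\<lambda>t. 0 < t \<and> P t", OF conjI[OF assms(1,2)]] by (simp_all add: d_def)
  have multiple: "P (d * m)" for m
  proof (induction m)
    case 0
    show ?case
      using diff[of N 0] \<open>P N\<close> by simp
  next
    case (Suc m)
    then show ?case
      using add[OF Suc d(2)] by (simp add: add.commute)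
  qed
  have "P t \<longleftrightarrow> d dvd t" for t
  proof
    assume "P t"
    then have "P (t mod d)"
      using diff[OF multiple[of "t div d"]] by simp
    moreover have "t mod d < d"
      using d(1) by simp
    ultimately have "t mod d = 0"
      using not_less_Least[of "t mod d" "\<lambda>t. 0 < t \<and> P t"] by (auto simp: d_def)
    then show "d dvd t"
      by (simp add: mod_eq_0_iff_dvd)
  qed (auto simp: multiple)
  with d(1) show ?thesis
    by blast
qed

lemma card_multiples_below:
  assumes "0 < d" "d dvd N"
  shows "card {t. t < N \<and> d dvd t} = N div (d::nat)"
proof -
  have "{t. t < N \<and> d dvd t} = (\<lambda>m. d * m) ` {..<N div d}"
    using assms by (auto simp: dvd_def)
  moreover have "inj_on (\<lambda>m. d * m) {..<N div d}"
    using assms(1) by (simp add: inj_on_def)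
  ultimately show ?thesis
    by (simp add: card_image)
qed

lemma card_field_ge_2: "2 \<le> CARD('a::{finite,field})"
proof -
  have "card {0::'a, 1} \<le> CARD('a)"
    by (rule card_mono) auto
  then show ?thesis
    by simp
qed

lemma cube_minus_one_factor: "(q::nat)^3 - 1 = (q^2 + q + 1) * (q - 1)"
  by (cases q) (simp_all add: algebra_simps power2_eq_square power3_eq_cube)

locale singer =
  fixes A :: "'a::{finite,field}^3^3"
  assumes singer_cycle: "singer_cycle A"
begin

lemma order_pos: "0 < CARD('a)^3 - 1"
proof -
  have "2^3 \<le> CARD('a)^3"
    using card_field_ge_2 by (rule power_mono) simp
  then show ?thesis
    by simp
qed

lemma mpow_order: "mpow A (CARD('a)^3 - 1) = mat 1"
  using singer_cycle by (simp add: singer_cycle_def)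

lemma mpow_add_order_mult: "mpow A (k + (CARD('a)^3 - 1) * m) = mpow A k"
  by (simp only: mpow_add mpow_mult mpow_order mpow_mat power_one matrix_mul_rid)

lemma order_eq_Suc: "CARD('a)^3 - 1 = Suc (CARD('a)^3 - 2)"
  using order_pos by simp

lemma order_pred_mult: "(CARD('a)^3 - 2) * i + i = (CARD('a)^3 - 1) * i"
  by (simp only: order_eq_Suc mult_Suc add.commute)

lemma mpow_pred_order: "mpow A (m + (CARD('a)^3 - 2) * i) ** mpow A i = mpow A m"
proof -
  have "m + (CARD('a)^3 - 2) * i + i = m + (CARD('a)^3 - 1) * i"
    by (simp only: add.assoc order_pred_mult)
  then show ?thesis
    by (metis mpow_add mpow_add_order_mult)
qed

lemma invertible_mpow: "invertible (mpow A k)"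
  using mpow_pred_order[of 0 k] by (metis invertible_def mpow_commute mpow_0 add_0)

lemma mpow_eq_mat1_iff: "mpow A k = mat 1 \<longleftrightarrow> (CARD('a)^3 - 1) dvd k"
proof
  let ?N = "CARD('a)^3 - 1"
  assume "mpow A k = mat 1"
  moreover have "mpow A k = mpow A (k mod ?N)"
    using mpow_add_order_mult[of "k mod ?N" "k div ?N"] by simp
  ultimately have "mpow A (k mod ?N) = mat 1"
    by simp
  moreover have "k mod ?N < ?N"
    using order_pos by simp
  ultimately have "k mod ?N = 0"
    using singer_cycle unfolding singer_cycle_def by (auto dest: spec[of _ "k mod ?N"])
  then show "?N dvd k"
    by (simp add: mod_eq_0_iff_dvd)
qed (metis mpow_add_order_mult mpow_0 add_0 dvdE)

lemma mpow_eq_iff: "mpow A i = mpow A j \<longleftrightarrow> [i = j] (mod CARD('a)^3 - 1)"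
proof -
  have *: "mpow A i = mpow A j \<longleftrightarrow> [i = j] (mod CARD('a)^3 - 1)" if "i \<le> j" for i j
  proof -
    have "mpow A j = mpow A i ** mpow A (j - i)"
      using that by (simp flip: mpow_add)
    then have "mpow A i = mpow A j \<longleftrightarrow> mpow A (j - i) = mat 1"
      by (metis invertible_left_cancel invertible_mpow matrix_mul_rid)
    also have "\<dots> \<longleftrightarrow> [j - i = 0] (mod CARD('a)^3 - 1)"
      by (simp add: mpow_eq_mat1_iff cong_0_iff)
    also have "\<dots> \<longleftrightarrow> [i = j] (mod CARD('a)^3 - 1)"
      by (metis cong_diff_iff_cong_0_nat cong_sym_eq that)
    finally show ?thesis .
  qed
  show ?thesis
    using *[of i j] *[of j i] by (metis cong_sym_eq nat_le_linear)
qed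

lemma inj_on_mpow: "inj_on (mpow A) {..<CARD('a)^3 - 1}"
  by (auto intro!: inj_onI simp: mpow_eq_iff dest: cong_less_modulus_unique_nat)

lemma range_matrix_poly2: "range (matrix_poly2 A) = insert 0 (mpow A ` {..<CARD('a)^3 - 1})"
  and inj_matrix_poly2: "inj (matrix_poly2 A)"
proof -
  let ?P = "insert 0 (mpow A ` {..<CARD('a)^3 - 1})"
  have sub: "?P \<subseteq> range (matrix_poly2 A)"
    using mpow_in_range_matrix_poly2 matrix_poly2_zero by (metis image_subsetI insert_subset rangeI)
  have "0 \<notin> mpow A ` {..<CARD('a)^3 - 1}"
    using invertible_nonzero[OF invertible_mpow] by auto
  then have card_P: "card ?P = CARD('a)^3"
    using order_pos card_image[OF inj_on_mpow] by simp
  have "card (range (matrix_poly2 A)) \<le> CARD('a \<times> 'a \<times> 'a)"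
    by (rule card_image_le) simp
  then have "card (range (matrix_poly2 A)) \<le> CARD('a)^3"
    by (simp add: power3_eq_cube)
  then have card_range: "card (range (matrix_poly2 A)) = CARD('a)^3"
    using card_mono[OF _ sub] card_P by simp
  show "range (matrix_poly2 A) = ?P"
    using card_subset_eq[OF _ sub] card_P card_range by simp
  show "inj (matrix_poly2 A)"
    by (rule eq_card_imp_inj_on) (simp_all add: card_range power3_eq_cube)
qed

lemma matrix_poly2_eq_mpow:
  assumes "c \<noteq> (0, 0, 0)"
  obtains k where "matrix_poly2 A c = mpow A k"
proof -
  have "matrix_poly2 A c \<noteq> 0"
    using assms inj_matrix_poly2 by (metis injD matrix_poly2_zero)
  then show ?thesis
    using that rangeI[of "matrix_poly2 A" c] unfolding range_matrix_poly2 by blast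
qed

lemma mat_eq_mpow:
  assumes "c \<noteq> 0"
  obtains k where "mpow A k = mat c"
  using matrix_poly2_eq_mpow[of "(c, 0, 0)"] assms by (simp add: matrix_poly2_def) metis

lemma mpow_transitive_on_nonzero:
  assumes "k1 \<noteq> 0" "k2 \<noteq> 0"
  obtains b where "mpow A b *v k1 = k2"
proof -
  let ?f = "\<lambda>c. matrix_poly2 A c *v k1"
  have "inj ?f"
  proof (rule injI)
    fix c c' assume eq: "?f c = ?f c'"
    obtain a0 a1 a2 b0 b1 b2 where c: "c = (a0, a1, a2)" "c' = (b0, b1, b2)"
      by (cases c, cases c') auto
    let ?d = "(a0 - b0, a1 - b1, a2 - b2)"
    have "matrix_poly2 A ?d *v k1 = 0"
      using eq unfolding c by (simp flip: matrix_poly2_diff add: matrix_vector_mult_diff_rdistrib)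
    then have "?d = (0, 0, 0)"
      using assms(1) inj_matrix_vector_mult[OF invertible_mpow]
      by (metis injD matrix_poly2_eq_mpow matrix_vector_mult_0_right)
    then show "c = c'"
      unfolding c by simp
  qed
  then have "range ?f = UNIV"
    by (intro card_subset_eq) (simp_all add: card_image power3_eq_cube)
  then have "k2 \<in> range ?f"
    by (simp only: UNIV_I)
  then obtain c where c: "?f c = k2"
    by blast
  with assms(2) have "c \<noteq> (0, 0, 0)"
    by auto
  then show ?thesis
    using that c by (metis matrix_poly2_eq_mpow)
qed

lemma is_scalar_mpow_add:
  "is_scalar (mpow A t) \<Longrightarrow> is_scalar (mpow A u) \<Longrightarrow> is_scalar (mpow A (t + u))"
  by (auto simp: is_scalar_def mpow_add mat_mult_mat)

lemma is_scalar_mpow_diff: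
  assumes "is_scalar (mpow A t)" "is_scalar (mpow A (t + u))"
  shows "is_scalar (mpow A u)"
proof -
  obtain c c' where c: "mpow A t = mat c" and c': "mpow A (t + u) = mat c'"
    using assms unfolding is_scalar_def by blast
  have "c \<noteq> 0"
    using c invertible_nonzero[OF invertible_mpow] by force
  then have "mpow A u = mat (inverse c) ** (mat c ** mpow A u)"
    by (simp add: mat_inverse_cancel)
  also have "\<dots> = mat (inverse c * c')"
    using c c' by (simp add: mpow_add matrix_mul_assoc mat_mult_mat)
  finally show ?thesis
    unfolding is_scalar_def by blast
qed

lemma card_scalar_exponents:
  "card {t. t < CARD('a)^3 - 1 \<and> is_scalar (mpow A t)} = CARD('a) - 1"
proof -
  let ?T = "{t. t < CARD('a)^3 - 1 \<and> is_scalar (mpow A t)}"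
  have image: "mpow A ` ?T = mat ` (UNIV - {0})"
  proof
    show "mpow A ` ?T \<subseteq> mat ` (UNIV - {0})"
      using invertible_nonzero[OF invertible_mpow] by (fastforce simp: is_scalar_def)
    show "mat ` (UNIV - {0}) \<subseteq> mpow A ` ?T"
    proof
      fix M :: "'a^3^3" assume "M \<in> mat ` (UNIV - {0})"
      then obtain c where "c \<noteq> 0" and M: "M = mat c"
        by blast
      then obtain k where k: "mpow A k = M"
        using mat_eq_mpow by metis
      have "mpow A (k mod (CARD('a)^3 - 1)) = mpow A k"
        by (simp add: mpow_eq_iff cong_def)
      moreover have "k mod (CARD('a)^3 - 1) < CARD('a)^3 - 1"
        using order_pos by simp
      ultimately show "M \<in> mpow A ` ?T"
        using k M by (auto simp: is_scalar_def intro!: image_eqI[of _ _ "k mod (CARD('a)^3 - 1)"])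
    qed
  qed
  have "inj_on (mpow A) ?T"
    by (rule inj_on_subset[OF inj_on_mpow]) auto
  then have "card ?T = card (mat ` (UNIV - {0}) :: ('a^3^3) set)"
    by (simp flip: image add: card_image)
  also have "\<dots> = card (UNIV - {0::'a})"
    by (rule card_image) (simp add: inj_on_def mat_inject)
  finally have "card ?T = card (UNIV - {0::'a})" .
  then show ?thesis
    by (simp add: card_Diff_singleton)
qed

lemma is_scalar_mpow_iff: "is_scalar (mpow A t) \<longleftrightarrow> (CARD('a)^2 + CARD('a) + 1) dvd t"
proof -
  let ?N = "CARD('a)^3 - 1"
  have "is_scalar (mpow A ?N)"
    using mpow_order by (auto simp: is_scalar_def)
  from closed_add_diff_imp_multiples[where P = "\<lambda>t. is_scalar (mpow A t)", OF order_pos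
      \<open>is_scalar (mpow A ?N)\<close> is_scalar_mpow_add is_scalar_mpow_diff]
  obtain d where "0 < d \<and> (\<forall>t. is_scalar (mpow A t) \<longleftrightarrow> d dvd t)" ..
  then have d: "0 < d" "\<And>t. is_scalar (mpow A t) \<longleftrightarrow> d dvd t"
    by simp_all
  have "d dvd ?N"
    using d(2) \<open>is_scalar (mpow A ?N)\<close> by blast
  then have "?N div d = CARD('a) - 1"
    using card_scalar_exponents card_multiples_below[OF d(1)] by (simp add: d(2))
  then have "d * (CARD('a) - 1) = ?N"
    using \<open>d dvd ?N\<close> by (metis dvd_mult_div_cancel)
  also have "\<dots> = (CARD('a)^2 + CARD('a) + 1) * (CARD('a) - 1)"
    by (rule cube_minus_one_factor)
  finally have "d * (CARD('a) - 1) = (CARD('a)^2 + CARD('a) + 1) * (CARD('a) - 1)" .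
  moreover have "CARD('a) - 1 \<noteq> 0"
    using card_field_ge_2[where 'a='a] by simp
  ultimately have "d = CARD('a)^2 + CARD('a) + 1"
    by (metis mult_right_cancel)
  then show ?thesis
    using d(2) by simp
qed

lemma mpow_eq_mat_mult_iff:
  "(\<exists>c. mpow A m = mat c ** mpow A i) \<longleftrightarrow> [m = i] (mod CARD('a)^2 + CARD('a) + 1)"
proof -
  let ?n = "CARD('a)^2 + CARD('a) + 1"
  let ?e = "m + (CARD('a)^3 - 2) * i"
  \<comment> \<open>\<open>A\<^sup>m A\<^sup>-\<^sup>i\<close> is the power of \<open>A\<close> with exponent \<open>?e\<close>\<close>
  have "mpow A m = mat c ** mpow A i \<longleftrightarrow> mpow A ?e = mat c" for c
    using mpow_pred_order[of m i] invertible_right_cancel[OF invertible_mpow[of i]] by metis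
  then have "(\<exists>c. mpow A m = mat c ** mpow A i) \<longleftrightarrow> is_scalar (mpow A ?e)"
    by (simp add: is_scalar_def)
  also have "\<dots> \<longleftrightarrow> [?e = 0] (mod ?n)"
    by (simp add: is_scalar_mpow_iff cong_0_iff)
  also have "\<dots> \<longleftrightarrow> [?e + i = 0 + i] (mod ?n)"
    by (rule cong_add_rcancel_nat[symmetric])
  also have "?e + i = m + ?n * ((CARD('a) - 1) * i)"
  proof -
    have "?e + i = m + (CARD('a)^3 - 1) * i"
      by (simp only: add.assoc order_pred_mult)
    also have "\<dots> = m + ?n * ((CARD('a) - 1) * i)"
      by (simp only: cube_minus_one_factor mult.assoc)
    finally show ?thesis .
  qed
  also have "[m + ?n * ((CARD('a) - 1) * i) = 0 + i] (mod ?n) \<longleftrightarrow> [m = i] (mod ?n)"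
    by (simp only: cong_def mod_mult_self2 add_0)
  finally show ?thesis .
qed

lemma mpow_eq_mat_mult:
  assumes "[m = i] (mod CARD('a)^2 + CARD('a) + 1)"
  obtains c where "c \<noteq> 0" "mpow A m = mat c ** mpow A i"
proof -
  obtain c where c: "mpow A m = mat c ** mpow A i"
    using assms mpow_eq_mat_mult_iff by blast
  moreover have "c \<noteq> 0"
    using c invertible_nonzero[OF invertible_mpow[of m]] by force
  ultimately show ?thesis
    using that by blast
qed

end

section \<open>Block-diagonal matrices and \<open>PGL(6, q)\<close>\<close>

definition block_diag :: "'a::zero^'m^'m \<Rightarrow> 'a^'n^'n \<Rightarrow> 'a^('m + 'n)^('m + 'n)" where
  "block_diag P Q = (\<chi> i j. case (i, j) of
     (Inl a, Inl b) \<Rightarrow> P $ a $ b | (Inr a, Inr b) \<Rightarrow> Q $ a $ b | _ \<Rightarrow> 0)"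

lemma sum_UNIV_sum:
  fixes f :: "'m::finite + 'n::finite \<Rightarrow> 'a::comm_monoid_add"
  shows "(\<Sum>i\<in>UNIV. f i) = (\<Sum>i\<in>UNIV. f (Inl i)) + (\<Sum>i\<in>UNIV. f (Inr i))"
  by (simp flip: UNIV_Plus_UNIV add: sum.Plus o_def)

lemma block_diag_mult:
  fixes P P' :: "'a::semiring_1^'m::finite^'m" and Q Q' :: "'a^'n::finite^'n"
  shows "block_diag P Q ** block_diag P' Q' = block_diag (P ** P') (Q ** Q')"
  by (simp add: vec_eq_iff matrix_matrix_mult_def block_diag_def sum_UNIV_sum split: sum.split)

lemma block_diag_mat: "block_diag (mat c) (mat c) = mat c"
  by (simp add: vec_eq_iff block_diag_def mat_def split: sum.split)

lemma block_diag_inject: "block_diag P Q = block_diag P' Q' \<longleftrightarrow> P = P' \<and> Q = Q'"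
proof
  assume eq: "block_diag P Q = block_diag P' Q'"
  have "P $ a $ b = P' $ a $ b" "Q $ c $ d = Q' $ c $ d" for a b c d
    using arg_cong[OF eq, of "\<lambda>M. M $ Inl a $ Inl b"] arg_cong[OF eq, of "\<lambda>M. M $ Inr c $ Inr d"]
    by (simp_all add: block_diag_def)
  then show "P = P' \<and> Q = Q'"
    by (simp add: vec_eq_iff)
qed simp

lemma mat_mult_block_diag:
  fixes P :: "'a::semiring_1^'m::finite^'m" and Q :: "'a^'n::finite^'n"
  shows "mat c ** block_diag P Q = block_diag (mat c ** P) (mat c ** Q)"
  by (metis block_diag_mat block_diag_mult)

lemma xpart_block_diag: "xpart (v v* block_diag P Q) = xpart v v* P"
  and ypart_block_diag: "ypart (v v* block_diag P Q) = ypart v v* Q"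
  by (simp_all add: vec_eq_iff vector_matrix_mult_def block_diag_def xpart_def ypart_def sum_UNIV_sum)

lemma mat_mult_mult_mat_mult:
  "(mat c ** M) ** (mat d ** N) = mat (c * d) ** (M ** N :: 'a::comm_semiring_1^'n^'n)"
  for M N :: "'a::comm_semiring_1^'n^'n"
proof -
  have "(mat c ** M) ** (mat d ** N) = mat c ** ((M ** mat d) ** N)"
    by (simp only: matrix_mul_assoc)
  also have "\<dots> = mat (c * d) ** (M ** N)"
    by (simp only: mat_commute[of M d] matrix_mul_assoc mat_mult_mat)
  finally show ?thesis .
qed

lemma proj_class_mult: "proj_class M \<otimes>\<^bsub>PGL6\<^esub> proj_class N = proj_class (M ** N)"
proof -
  have "{M' ** N' | M' N'. M' \<in> proj_class M \<and> N' \<in> proj_class N} = proj_class (M ** N)"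
  proof
    show "{M' ** N' | M' N'. M' \<in> proj_class M \<and> N' \<in> proj_class N} \<subseteq> proj_class (M ** N)"
      unfolding proj_class_def using mat_mult_mult_mat_mult by fastforce
    show "proj_class (M ** N) \<subseteq> {M' ** N' | M' N'. M' \<in> proj_class M \<and> N' \<in> proj_class N}"
    proof
      fix X assume "X \<in> proj_class (M ** N)"
      then obtain c where "c \<noteq> 0" "X = (mat c ** M) ** (mat 1 ** N)"
        unfolding proj_class_def by (auto simp: matrix_mul_assoc)
      then show "X \<in> {M' ** N' | M' N'. M' \<in> proj_class M \<and> N' \<in> proj_class N}"
        unfolding proj_class_def by fastforce
    qed
  qed
  then show ?thesis
    by (simp add: PGL6_def)
qed

lemma proj_class_mat_mult:
  assumes "c \<noteq> 0"
  shows "proj_class (mat c ** M) = proj_class M"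
proof
  show "proj_class (mat c ** M) \<subseteq> proj_class M"
  proof
    fix X assume "X \<in> proj_class (mat c ** M)"
    then obtain d where "d \<noteq> 0" "X = mat (d * c) ** M"
      by (auto simp: proj_class_def matrix_mul_assoc mat_mult_mat)
    with assms show "X \<in> proj_class M"
      by (auto simp: proj_class_def)
  qed
  show "proj_class M \<subseteq> proj_class (mat c ** M)"
  proof
    fix X assume "X \<in> proj_class M"
    then obtain d where "d \<noteq> 0" "X = mat (d / c) ** (mat c ** M)"
      using assms by (auto simp: proj_class_def matrix_mul_assoc mat_mult_mat)
    with assms show "X \<in> proj_class (mat c ** M)"
      by (auto simp: proj_class_def)
  qed
qed

lemma proj_class_eqD:
  assumes "proj_class M = proj_class N"
  obtains c where "c \<noteq> 0" "M = mat c ** N"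
proof -
  have "M \<in> proj_class M"
    unfolding proj_class_def by (intro CollectI exI[of _ 1]) simp
  then have "M \<in> proj_class N"
    unfolding assms .
  then show ?thesis
    using that unfolding proj_class_def by blast
qed

lemma carrier_PGL6: "carrier PGL6 = proj_class ` {M. invertible M}"
  and one_PGL6: "\<one>\<^bsub>PGL6\<^esub> = proj_class (mat 1)"
  by (simp_all add: PGL6_def)

lemma group_PGL6: "group (PGL6 :: ('a::field^(3+3)^(3+3)) set monoid)"
proof (rule groupI)
  fix X Y :: "('a^(3+3)^(3+3)) set"
  assume "X \<in> carrier PGL6" "Y \<in> carrier PGL6"
  then show "X \<otimes>\<^bsub>PGL6\<^esub> Y \<in> carrier PGL6"
    by (auto simp: carrier_PGL6 proj_class_mult invertible_mult)
next
  show "\<one>\<^bsub>PGL6\<^esub> \<in> (carrier PGL6 :: ('a^(3+3)^(3+3)) set set)"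
    by (auto simp: carrier_PGL6 one_PGL6 invertible_def)
next
  fix X Y Z :: "('a^(3+3)^(3+3)) set"
  assume "X \<in> carrier PGL6" "Y \<in> carrier PGL6" "Z \<in> carrier PGL6"
  then show "X \<otimes>\<^bsub>PGL6\<^esub> Y \<otimes>\<^bsub>PGL6\<^esub> Z = X \<otimes>\<^bsub>PGL6\<^esub> (Y \<otimes>\<^bsub>PGL6\<^esub> Z)"
    by (auto simp: carrier_PGL6 proj_class_mult matrix_mul_assoc)
next
  fix X :: "('a^(3+3)^(3+3)) set"
  assume "X \<in> carrier PGL6"
  then show "\<one>\<^bsub>PGL6\<^esub> \<otimes>\<^bsub>PGL6\<^esub> X = X"
    by (auto simp: carrier_PGL6 one_PGL6 proj_class_mult)
next
  fix X :: "('a^(3+3)^(3+3)) set"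
  assume "X \<in> carrier PGL6"
  then obtain M M' where "X = proj_class M" "M' ** M = mat 1" "invertible M'"
    by (auto simp: carrier_PGL6 invertible_def)
  then show "\<exists>Y\<in>carrier PGL6. Y \<otimes>\<^bsub>PGL6\<^esub> X = \<one>\<^bsub>PGL6\<^esub>"
    by (auto simp: carrier_PGL6 one_PGL6 proj_class_mult)
qed

lemma vector_matrix_mult_mat_mult: "v v* (mat c ** M) = (c *s v) v* (M::'a::field^'n^'m)"
  by (simp flip: vector_matrix_mul_assoc add: vector_matrix_mult_mat scalar_vector_matrix_assoc)

lemma pgl_act_proj_class:
  assumes "vec.subspace S"
  shows "pgl_act (proj_class M) S = (\<lambda>v. v v* M) ` S"
proof
  show "pgl_act (proj_class M) S \<subseteq> (\<lambda>v. v v* M) ` S"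
    using assms vec.subspace_scale
    by (fastforce simp: pgl_act_def proj_class_def vector_matrix_mult_mat_mult)
  show "(\<lambda>v. v v* M) ` S \<subseteq> pgl_act (proj_class M) S"
    unfolding pgl_act_def proj_class_def by (fastforce intro: exI[of _ 1])
qed

section \<open>Planes of the quadrics\<close>

definition vec_of_parts :: "'a^3 \<Rightarrow> 'a^3 \<Rightarrow> 'a^(3+3)" where
  "vec_of_parts x y = (\<chi> i. case i of Inl j \<Rightarrow> x $ j | Inr j \<Rightarrow> y $ j)"

lemma xpart_vec_of_parts [simp]: "xpart (vec_of_parts x y) = x"
  and ypart_vec_of_parts [simp]: "ypart (vec_of_parts x y) = y"
  by (simp_all add: xpart_def ypart_def vec_of_parts_def)

lemma vec_eq_parts_iff: "v = w \<longleftrightarrow> xpart v = xpart w \<and> ypart v = ypart w"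
proof -
  have "vec_of_parts (xpart v) (ypart v) = v" for v :: "'a^(3+3)"
    by (simp add: vec_eq_iff xpart_def ypart_def vec_of_parts_def split: sum.split)
  then show ?thesis
    by metis
qed

lemma xpart_add [simp]: "xpart (v + w) = xpart v + xpart w"
  and ypart_add [simp]: "ypart (v + w) = ypart v + ypart w"
  and xpart_diff [simp]: "xpart (v - w) = xpart v - xpart w"
  and ypart_diff [simp]: "ypart (v - w) = ypart v - ypart w"
  and xpart_scale [simp]: "xpart (c *s v) = c *s xpart v"
  and ypart_scale [simp]: "ypart (c *s v) = c *s ypart v"
  by (simp_all add: xpart_def ypart_def vec_eq_iff)

lemma linear_xpart: "Vector_Spaces.linear (*s) (*s) (xpart :: 'a::field^(3+3) \<Rightarrow> 'a^3)"
  and linear_ypart: "Vector_Spaces.linear (*s) (*s) (ypart :: 'a::field^(3+3) \<Rightarrow> 'a^3)"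
  by (simp_all add: Vector_Spaces.linear_iff vec.vector_space_axioms)

lemma linear_vector_matrix: "Vector_Spaces.linear (*s) (*s) (\<lambda>v. v v* (M::'a::field^'m^'n))"
proof -
  have "(\<lambda>v. v v* M) = (*v) (transpose M)"
    by (simp add: fun_eq_iff)
  then show ?thesis
    by simp
qed

lemma subspace_image_vector_matrix:
  "vec.subspace S \<Longrightarrow> vec.subspace ((\<lambda>v. v v* (M::'a::field^'m^'n)) ` S)"
  by (rule vec.linear_subspace_image[OF linear_vector_matrix])

lemma inj_vector_matrix:
  assumes "invertible (M::'a::field^'n^'n)"
  shows "inj (\<lambda>v. v v* M)"
proof (rule injI)
  fix v w assume "v v* M = w v* M"
  moreover obtain M' where "M ** M' = mat 1"
    using assms invertible_def by blast
  ultimately show "v = w"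
    by (metis vector_matrix_mul_assoc vector_matrix_mul_rid)
qed

lemma dim_image_vector_matrix:
  "invertible M \<Longrightarrow> vec.dim ((\<lambda>v. v v* (M::'a::field^'n^'n)) ` S) = vec.dim S"
  by (rule vec.dim_image_eq[OF linear_vector_matrix]) (simp add: inj_on_subset[OF inj_vector_matrix])

lemma pg_point_image:
  "invertible M \<Longrightarrow> pg_point S \<Longrightarrow> pg_point ((\<lambda>v. v v* M) ` S)"
  and pg_plane_image:
  "invertible M \<Longrightarrow> pg_plane S \<Longrightarrow> pg_plane ((\<lambda>v. v v* M) ` S)"
  by (simp_all add: pg_point_def pg_plane_def subspace_image_vector_matrix dim_image_vector_matrix)

lemma image_G_set:
  fixes M :: "'a::field^(3+3)^(3+3)"
  assumes M: "invertible M"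
    and pi1: "\<And>v. v v* M \<in> pi1 \<longleftrightarrow> v \<in> pi1"
    and pi2: "\<And>v. v v* M \<in> pi2 \<longleftrightarrow> v \<in> pi2"
    and quad: "\<And>v. quad_form A i (v v* M) = quad_form A j v"
    and S: "S \<in> G_set A j"
  shows "(\<lambda>v. v v* M) ` S \<in> G_set A i"
proof -
  let ?f = "\<lambda>v. v v* M"
  have S_plane: "pg_plane S" and S_point: "pg_point (S \<inter> pi1)"
    and S_ne: "S \<noteq> pi1" and S_pi2: "S \<inter> pi2 = {0}" and S_quad: "\<forall>v\<in>S. quad_form A j v = 0"
    using S unfolding G_set_def quadric_planes_def same_class_def by auto
  have image_pi1: "?f ` S \<inter> pi1 = ?f ` (S \<inter> pi1)" and image_pi2: "?f ` S \<inter> pi2 = ?f ` (S \<inter> pi2)"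
    using pi1 pi2 by auto
  have "?f ` S \<noteq> pi1"
  proof
    assume "?f ` S = pi1"
    then have "?f ` (S \<inter> pi1) = ?f ` S"
      using image_pi1 by simp
    then have "S \<inter> pi1 = S"
      using inj_vector_matrix[OF M] by (simp add: inj_image_eq_iff)
    then show False
      using S_point S_plane by (simp add: pg_point_def pg_plane_def)
  qed
  moreover have "pg_point (?f ` S \<inter> pi1)"
    unfolding image_pi1 using pg_point_image[OF M S_point] .
  moreover have "?f ` S \<inter> pi2 = {0}"
    unfolding image_pi2 S_pi2 by simp
  ultimately show ?thesis
    using pg_plane_image[OF M S_plane] S_quad quad
    by (auto simp: G_set_def quadric_planes_def same_class_def)
qed

definition dotp :: "'a::comm_semiring_1^'n \<Rightarrow> 'a^'n \<Rightarrow> 'a" where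
  "dotp x y = (\<Sum>k\<in>UNIV. x $ k * y $ k)"

lemma dotp_vector_matrix: "dotp (u v* M) y = dotp u (M *v y)"
proof -
  have "dotp (u v* M) y = (\<Sum>j\<in>UNIV. \<Sum>k\<in>UNIV. u $ k * (M $ k $ j * y $ j))"
    by (simp add: dotp_def vector_matrix_mult_def sum_distrib_right mult.assoc)
  also have "\<dots> = dotp u (M *v y)"
    by (subst sum.swap) (simp add: dotp_def matrix_vector_mult_def sum_distrib_left)
  finally show ?thesis .
qed

lemma dotp_scale: "dotp (c *s u) y = c * dotp u y"
  by (simp add: dotp_def sum_distrib_left mult.assoc)

lemma quad_form_dotp: "quad_form A i v = dotp (xpart v v* mpow A i) (ypart v)"
  unfolding quad_form_def dotp_def vector_matrix_mult_def
  by (subst sum.swap) (simp add: sum_distrib_right)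

lemma quad_form_mat_mult:
  "mpow A j = mat c ** mpow A i \<Longrightarrow> quad_form A j v = c * quad_form A i v"
  by (simp add: quad_form_dotp vector_matrix_mult_mat_mult scalar_vector_matrix_assoc dotp_scale)

definition alternating :: "'a::comm_semiring_1^'n^'n \<Rightarrow> bool" where
  "alternating K \<longleftrightarrow> (\<forall>y. dotp (y v* K) y = 0)"

lemma alternating_congruence:
  assumes "alternating K"
  shows "alternating (P ** K ** transpose P)"
  unfolding alternating_def
proof
  fix y
  have "dotp (y v* (P ** K ** transpose P)) y = dotp ((y v* P) v* K) (transpose P *v y)"
    by (simp only: dotp_vector_matrix flip: vector_matrix_mul_assoc)
  also have "\<dots> = 0"
    using assms by (simp add: alternating_def)
  finally show "dotp (y v* (P ** K ** transpose P)) y = 0" .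
qed

text \<open>\<open>y v* cross_mat k\<close> is the cross product \<open>k \<times> y\<close>.\<close>
definition cross_mat :: "'a::comm_ring_1^3 \<Rightarrow> 'a^3^3" where
  "cross_mat k = vector [vector [0, k$3, - k$2], vector [- k$3, 0, k$1], vector [k$2, - k$1, 0]]"

lemma vector_matrix_mult_3: "(y v* M) $ j = y$1 * M$1$j + y$2 * M$2$j + y$3 * (M::'a::semiring_1^3^3)$3$j"
  by (simp add: vector_matrix_mult_def sum_3)

lemma alternating_3_cross_mat:
  fixes K :: "'a::comm_ring_1^3^3"
  assumes "alternating K"
  obtains u where "K = cross_mat u"
proof -
  have e: "(x1*K$1$1 + x2*K$2$1 + x3*K$3$1)*x1 + (x1*K$1$2 + x2*K$2$2 + x3*K$3$2)*x2
      + (x1*K$1$3 + x2*K$2$3 + x3*K$3$3)*x3 = 0" for x1 x2 x3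
    using assms unfolding alternating_def
    by (auto simp: dotp_def sum_3 vector_matrix_mult_3 dest: spec[of _ "vector [x1, x2, x3]"])
  have "K$1$1 = 0" "K$2$2 = 0" "K$3$3 = 0"
    using e[of 1 0 0] e[of 0 1 0] e[of 0 0 1] by simp_all
  moreover have "K$2$1 = - K$1$2" "K$3$1 = - K$1$3" "K$3$2 = - K$2$3"
    using e[of 1 1 0] e[of 1 0 1] e[of 0 1 1] calculation
    by (simp_all add: algebra_simps eq_neg_iff_add_eq_0)
  ultimately have "K = cross_mat (vector [K$2$3, - K$1$3, K$1$2])"
    unfolding cross_mat_def vec_eq_iff forall_3 by simp
  then show ?thesis
    by (rule that)
qed

lemma cross_mat_kernel: "k v* cross_mat k = 0"
  unfolding vec_eq_iff forall_3 vector_matrix_mult_3 cross_mat_def by (simp add: algebra_simps)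

lemma cross_mat_eq_0_iff: "cross_mat k = 0 \<longleftrightarrow> k = 0"
  unfolding cross_mat_def vec_eq_iff forall_3 by auto

lemma cross_mat_scale: "cross_mat (t *s k) = mat t ** cross_mat k"
  unfolding cross_mat_def vec_eq_iff forall_3 mat_mult_nth by simp

lemma cross_mat_kernel_parallel:
  fixes k u :: "'a::field^3"
  assumes "k \<noteq> 0" "k v* cross_mat u = 0"
  obtains t where "u = t *s k"
proof -
  have e: "k$3 * u$2 = k$2 * u$3" "k$1 * u$3 = k$3 * u$1" "k$2 * u$1 = k$1 * u$2"
    using assms(2) unfolding vec_eq_iff forall_3 vector_matrix_mult_3 cross_mat_def
    by (simp_all add: algebra_simps)
  consider "k$1 \<noteq> 0" | "k$2 \<noteq> 0" | "k$3 \<noteq> 0"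
    using assms(1) unfolding vec_eq_iff forall_3 by auto
  then show ?thesis
  proof cases
    case 1
    with e have "u = (u$1 / k$1) *s k"
      unfolding vec_eq_iff forall_3 by (simp add: field_simps)
    then show ?thesis
      by (rule that)
  next
    case 2
    with e have "u = (u$2 / k$2) *s k"
      unfolding vec_eq_iff forall_3 by (simp add: field_simps)
    then show ?thesis
      by (rule that)
  next
    case 3
    with e have "u = (u$3 / k$3) *s k"
      unfolding vec_eq_iff forall_3 by (simp add: field_simps)
    then show ?thesis
      by (rule that)
  qed
qed

lemma alternating_3_kernel:
  fixes K :: "'a::comm_ring_1^3^3"
  assumes "alternating K" "K \<noteq> 0"
  obtains k where "k \<noteq> 0" "k v* K = 0"
proof -
  obtain k where K: "K = cross_mat k"
    using alternating_3_cross_mat[OF assms(1)] by blast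
  show ?thesis
  proof (rule that)
    show "k \<noteq> 0"
      using assms(2) by (simp add: K cross_mat_eq_0_iff)
    show "k v* K = 0"
      unfolding K by (rule cross_mat_kernel)
  qed
qed

lemma alternating_3_common_kernel:
  fixes K K' :: "'a::field^3^3"
  assumes "alternating K" "alternating K'" "K' \<noteq> 0"
    and "k \<noteq> 0" "k v* K = 0" "k v* K' = 0"
  obtains c where "K = mat c ** K'"
proof -
  obtain u u' where u: "K = cross_mat u" and u': "K' = cross_mat u'"
    using alternating_3_cross_mat assms(1,2) by metis
  obtain t where "u = t *s k"
    using cross_mat_kernel_parallel[OF assms(4)] assms(5) unfolding u by blast
  moreover obtain t' where "u' = t' *s k"
    using cross_mat_kernel_parallel[OF assms(4)] assms(6) unfolding u' by blast
  ultimately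
  have K: "K = mat t ** cross_mat k" and K': "K' = mat t' ** cross_mat k"
    using u u' by (simp_all add: cross_mat_scale)
  with assms(3) have "t' \<noteq> 0"
    by auto
  then have "K = mat (t / t') ** K'"
    unfolding K K' by (simp add: matrix_mul_assoc mat_mult_mat)
  then show ?thesis
    by (rule that)
qed

definition graph_plane :: "'a::semiring_1^3^3 \<Rightarrow> ('a^(3+3)) set" where
  "graph_plane C = {v. xpart v = ypart v v* C}"

lemma ypart_image_eq_UNIV:
  assumes "pg_plane S" "S \<inter> pi2 = {0}"
  shows "ypart ` S = UNIV"
proof -
  have S: "vec.subspace S" "vec.dim S = 3"
    using assms(1) by (auto simp: pg_plane_def)
  have "inj_on ypart S"
  proof (rule inj_onI)
    fix u w assume "u \<in> S" "w \<in> S" "ypart u = ypart w"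
    then have "u - w \<in> S \<inter> pi2"
      using vec.subspace_diff[OF S(1)] by (simp add: pi2_def)
    then show "u = w"
      using assms(2) by auto
  qed
  moreover have "vec.span S = S"
    using S(1) by (simp add: vec.span_eq_iff)
  ultimately have "vec.dim (ypart ` S) = 3"
    using vec.dim_image_eq[OF linear_ypart, of S] S(2) by (simp only:)
  then have "vec.span (ypart ` S) = UNIV"
    using vec.dim_eq_full[of "ypart ` S"] by (simp add: vec.dimension_def card_cart_basis)
  then show ?thesis
    using vec.linear_subspace_image[OF linear_ypart S(1)] by (metis vec.span_eq_iff)
qed

lemma pg_plane_graph_plane:
  assumes "pg_plane S" "S \<inter> pi2 = {0}"
  obtains C where "S = graph_plane C"
proof -
  have S: "vec.subspace S" "vec.span S = S"
    using assms(1) by (auto simp: pg_plane_def vec.span_eq_iff)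
  obtain g where g: "range g \<subseteq> S" "Vector_Spaces.linear (*s) (*s) g" "\<And>y. ypart (g y) = y"
    using vec.linear_surj_right_inverse[OF linear_ypart, of UNIV S] ypart_image_eq_UNIV[OF assms] S(2)
    by auto
  define C where "C = transpose (matrix (xpart \<circ> g))"
  have C: "y v* C = xpart (g y)" for y
    unfolding C_def using matrix_works[OF Vector_Spaces.linear_compose[OF g(2) linear_xpart]] by simp
  have g_ypart: "g (ypart v) = v" if "v \<in> S" for v
  proof -
    have "v - g (ypart v) \<in> S \<inter> pi2"
      using vec.subspace_diff[OF S(1) that] g(1,3) by (auto simp: pi2_def)
    then show ?thesis
      using assms(2) by auto
  qed
  have "S = graph_plane C"
  proof
    show "S \<subseteq> graph_plane C"
      using g_ypart by (force simp: graph_plane_def C)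
    show "graph_plane C \<subseteq> S"
    proof
      fix v assume "v \<in> graph_plane C"
      then have "v = g (ypart v)"
        by (simp add: graph_plane_def C g(3) vec_eq_parts_iff[of v])
      then show "v \<in> S"
        using g(1) by auto
    qed
  qed
  then show ?thesis
    by (rule that)
qed

lemma G_set_graph_plane:
  assumes "S \<in> G_set A i"
  obtains C where "S = graph_plane C" "C \<noteq> 0" "alternating (C ** mpow A i)"
proof -
  have S: "pg_plane S" "\<forall>v\<in>S. quad_form A i v = 0" "S \<noteq> pi1" "S \<inter> pi2 = {0}"
    using assms unfolding G_set_def quadric_planes_def by auto
  obtain C where graph: "S = graph_plane C"
    using pg_plane_graph_plane[OF S(1,4)] by blast
  moreover have "C \<noteq> 0"
    using graph S(3) by (auto simp: graph_plane_def pi1_def)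
  moreover have "alternating (C ** mpow A i)"
  proof -
    have "quad_form A i (vec_of_parts (y v* C) y) = 0" for y
      using S(2) graph by (simp add: graph_plane_def)
    then show ?thesis
      by (simp add: alternating_def quad_form_dotp vector_matrix_mul_assoc)
  qed
  ultimately show ?thesis
    using that by blast
qed

lemma image_graph_plane_block_diag:
  fixes C1 C2 P Q :: "'a::field^3^3"
  assumes PC: "P ** C2 = C1 ** Q" and P: "invertible P"
  shows "(\<lambda>v. v v* block_diag Q P) ` graph_plane C1 = graph_plane C2"
proof
  show "(\<lambda>v. v v* block_diag Q P) ` graph_plane C1 \<subseteq> graph_plane C2"
    by (auto simp: graph_plane_def xpart_block_diag ypart_block_diag vector_matrix_mul_assoc PC)
  show "graph_plane C2 \<subseteq> (\<lambda>v. v v* block_diag Q P) ` graph_plane C1"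
  proof
    fix w assume w: "w \<in> graph_plane C2"
    obtain P' where P': "P' ** P = mat 1"
      using P invertible_def by blast
    define y where "y = ypart w v* P'"
    have yP: "y v* P = ypart w"
      by (simp add: y_def vector_matrix_mul_assoc P')
    have "y v* (C1 ** Q) = xpart w"
      using w yP by (simp add: graph_plane_def flip: PC vector_matrix_mul_assoc)
    then have "vec_of_parts (y v* C1) y v* block_diag Q P = w"
      using yP by (simp add: vec_eq_parts_iff xpart_block_diag ypart_block_diag vector_matrix_mul_assoc)
    moreover have "vec_of_parts (y v* C1) y \<in> graph_plane C1"
      by (simp add: graph_plane_def)
    ultimately show "w \<in> (\<lambda>v. v v* block_diag Q P) ` graph_plane C1"
      by blast
  qed
qed

section \<open>The Singer group\<close>

lemma subspace_orbit_code_C: "S \<in> orbit_code_C A \<Longrightarrow> vec.subspace S"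
  by (auto simp: orbit_code_C_def G_set_def quadric_planes_def pg_plane_def)

definition singer_block :: "'a::comm_semiring_1^3^3 \<Rightarrow> nat \<Rightarrow> nat \<Rightarrow> 'a^(3+3)^(3+3)" where
  "singer_block A a b = block_diag (mpow A a) (transpose (mpow A b))"

definition singer_group :: "'a::field^3^3 \<Rightarrow> ('a^(3+3)^(3+3)) set set" where
  "singer_group A = {proj_class (singer_block A a b) | a b. True}"

lemma singer_block_mult:
  "singer_block A a b ** singer_block A a' b' = singer_block A (a + a') (b + b')"
  by (simp add: singer_block_def block_diag_mult mpow_add mpow_commute[of A b'] flip: matrix_transpose_mul)

lemma xpart_singer_block: "xpart (v v* singer_block A a b) = xpart v v* mpow A a"
  and ypart_singer_block: "ypart (v v* singer_block A a b) = mpow A b *v ypart v"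
  by (simp_all add: singer_block_def xpart_block_diag ypart_block_diag)

lemma quad_form_singer_block:
  "quad_form A i (v v* singer_block A a b) = quad_form A (a + i + b) v"
  by (simp add: quad_form_dotp xpart_singer_block ypart_singer_block dotp_vector_matrix
      vector_matrix_mul_assoc mpow_add flip: dotp_vector_matrix)

context singer
begin

lemma singer_block_order: "singer_block A ((CARD('a)^3 - 1) * a) ((CARD('a)^3 - 1) * b) = mat 1"
  using mpow_add_order_mult[of 0] by (simp add: singer_block_def block_diag_mat)

lemma singer_block_inverse:
  "singer_block A a b ** singer_block A (a * (CARD('a)^3 - 2)) (b * (CARD('a)^3 - 2)) = mat 1"
  "singer_block A (a * (CARD('a)^3 - 2)) (b * (CARD('a)^3 - 2)) ** singer_block A a b = mat 1"
proof -
  have k: "k + k * (CARD('a)^3 - 2) = (CARD('a)^3 - 1) * k" for k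
    by (metis order_pred_mult add.commute mult.commute)
  show "singer_block A a b ** singer_block A (a * (CARD('a)^3 - 2)) (b * (CARD('a)^3 - 2)) = mat 1"
    by (simp only: singer_block_mult k singer_block_order)
  show "singer_block A (a * (CARD('a)^3 - 2)) (b * (CARD('a)^3 - 2)) ** singer_block A a b = mat 1"
    by (simp only: singer_block_mult add.commute[of "_ * (CARD('a)^3 - 2)"] k singer_block_order)
qed

lemma invertible_singer_block: "invertible (singer_block A a b)"
  using singer_block_inverse invertible_def by blast

lemma subgroup_singer_group: "subgroup (singer_group A) PGL6"
proof
  show "singer_group A \<subseteq> carrier PGL6"
    using invertible_singer_block by (auto simp: singer_group_def carrier_PGL6)
  show "X \<otimes>\<^bsub>PGL6\<^esub> Y \<in> singer_group A" if XY: "X \<in> singer_group A" "Y \<in> singer_group A" for X Y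
  proof -
    obtain a b a' b' where "X = proj_class (singer_block A a b)" "Y = proj_class (singer_block A a' b')"
      using XY by (auto simp: singer_group_def)
    then have "X \<otimes>\<^bsub>PGL6\<^esub> Y = proj_class (singer_block A (a + a') (b + b'))"
      by (simp add: proj_class_mult singer_block_mult)
    then show ?thesis
      unfolding singer_group_def by blast
  qed
  have "proj_class (mat 1) = proj_class (singer_block A 0 0)"
    by (simp add: singer_block_def block_diag_mat)
  then show "\<one>\<^bsub>PGL6\<^esub> \<in> singer_group A"
    unfolding singer_group_def one_PGL6 by blast
  show "inv\<^bsub>PGL6\<^esub> X \<in> singer_group A" if X: "X \<in> singer_group A" for X
  proof -
    obtain a b where X: "X = proj_class (singer_block A a b)"
      using X by (auto simp: singer_group_def)
    let ?Y = "proj_class (singer_block A (a * (CARD('a)^3 - 2)) (b * (CARD('a)^3 - 2)))"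
    have "inv\<^bsub>PGL6\<^esub> X = ?Y"
      using group.inv_equality[OF group_PGL6, of ?Y X] invertible_singer_block
      by (simp add: X proj_class_mult singer_block_inverse one_PGL6 carrier_PGL6)
    then show ?thesis
      by (auto simp: singer_group_def)
  qed
qed

lemma proj_class_singer_block_reduce:
  obtains a' where "a' < CARD('a)^3 - 1"
    "proj_class (singer_block A a b) = proj_class (singer_block A a' (b mod (CARD('a)^2 + CARD('a) + 1)))"
proof -
  let ?N = "CARD('a)^3 - 1" and ?n = "CARD('a)^2 + CARD('a) + 1"
  obtain c where c: "c \<noteq> 0" "mpow A b = mat c ** mpow A (b mod ?n)"
    using mpow_eq_mat_mult[of b "b mod ?n"] by (auto simp: cong_def)
  obtain t where t: "mpow A t = mat (inverse c)"
    using mat_eq_mpow c(1) by (metis inverse_nonzero_iff_nonzero)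
  have "mpow A a = mat c ** mpow A (t + a)"
    using c(1) by (simp add: mpow_add t matrix_mul_assoc mat_mult_mat)
  also have "mpow A (t + a) = mpow A ((t + a) mod ?N)"
    by (simp add: mpow_eq_iff cong_def)
  finally have "singer_block A a b = mat c ** singer_block A ((t + a) mod ?N) (b mod ?n)"
    using c(2) by (simp add: singer_block_def mat_mult_block_diag matrix_transpose_mul mat_commute)
  then have "proj_class (singer_block A a b) = proj_class (singer_block A ((t + a) mod ?N) (b mod ?n))"
    using proj_class_mat_mult[OF c(1)] by simp
  moreover have "(t + a) mod ?N < ?N"
    using order_pos by simp
  ultimately show ?thesis
    using that by blast
qed

lemma singer_group_eq_image:
  "singer_group A = (\<lambda>(a, b). proj_class (singer_block A a b)) `
     ({..<CARD('a)^3 - 1} \<times> {..<CARD('a)^2 + CARD('a) + 1})"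
proof
  show "singer_group A \<subseteq> (\<lambda>(a, b). proj_class (singer_block A a b)) `
      ({..<CARD('a)^3 - 1} \<times> {..<CARD('a)^2 + CARD('a) + 1})"
  proof
    fix X assume "X \<in> singer_group A"
    then obtain a b where "X = proj_class (singer_block A a b)"
      by (auto simp: singer_group_def)
    then obtain a' where "a' < CARD('a)^3 - 1"
      "X = proj_class (singer_block A a' (b mod (CARD('a)^2 + CARD('a) + 1)))"
      using proj_class_singer_block_reduce by metis
    then show "X \<in> (\<lambda>(a, b). proj_class (singer_block A a b)) `
        ({..<CARD('a)^3 - 1} \<times> {..<CARD('a)^2 + CARD('a) + 1})"
      by force
  qed
qed (auto simp: singer_group_def)

lemma proj_class_singer_block_inject:
  assumes a: "a1 < CARD('a)^3 - 1" "a2 < CARD('a)^3 - 1"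
    and b: "b1 < CARD('a)^2 + CARD('a) + 1" "b2 < CARD('a)^2 + CARD('a) + 1"
    and eq: "proj_class (singer_block A a1 b1) = proj_class (singer_block A a2 b2)"
  shows "a1 = a2 \<and> b1 = b2"
proof -
  obtain c where "singer_block A a1 b1 = mat c ** singer_block A a2 b2"
    using proj_class_eqD[OF eq] by blast
  then have ea: "mpow A a1 = mat c ** mpow A a2" and eb: "mpow A b1 = mat c ** mpow A b2"
    by (simp_all add: singer_block_def mat_mult_block_diag block_diag_inject)
      (metis matrix_transpose_mul mat_commute transpose_mat transpose_transpose)
  then have "[b1 = b2] (mod CARD('a)^2 + CARD('a) + 1)"
    using mpow_eq_mat_mult_iff by blast
  then have "b1 = b2"
    using b cong_less_modulus_unique_nat by blast
  then have "mat 1 ** mpow A b1 = mat c ** mpow A b1"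
    using eb by simp
  then have "c = 1"
    using invertible_right_cancel[OF invertible_mpow] mat_inject by metis
  then have "[a1 = a2] (mod CARD('a)^3 - 1)"
    using ea by (simp add: mpow_eq_iff)
  then show ?thesis
    using a \<open>b1 = b2\<close> cong_less_modulus_unique_nat by blast
qed

lemma inj_on_singer_group:
  "inj_on (\<lambda>(a, b). proj_class (singer_block A a b))
     ({..<CARD('a)^3 - 1} \<times> {..<CARD('a)^2 + CARD('a) + 1})"
proof (rule inj_onI)
  fix p q
  assume p: "p \<in> {..<CARD('a)^3 - 1} \<times> {..<CARD('a)^2 + CARD('a) + 1}"
    and q: "q \<in> {..<CARD('a)^3 - 1} \<times> {..<CARD('a)^2 + CARD('a) + 1}"
    and eq: "(\<lambda>(a, b). proj_class (singer_block A a b)) p = (\<lambda>(a, b). proj_class (singer_block A a b)) q"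
  obtain a1 b1 a2 b2 where "p = (a1, b1)" "q = (a2, b2)"
    by (cases p, cases q)
  with p q eq show "p = q"
    using proj_class_singer_block_inject[of a1 a2 b1 b2] by simp
qed

lemma card_singer_group:
  "card (singer_group A) = (CARD('a)^3 - 1) * (CARD('a)^2 + CARD('a) + 1)"
  unfolding singer_group_eq_image card_image[OF inj_on_singer_group] by simp

lemma G_set_cong:
  assumes "[i = j] (mod CARD('a)^2 + CARD('a) + 1)"
  shows "G_set A i = G_set A j"
proof -
  obtain c where "c \<noteq> 0" "mpow A i = mat c ** mpow A j"
    using mpow_eq_mat_mult[OF assms] by blast
  then have "quad_form A i v = 0 \<longleftrightarrow> quad_form A j v = 0" for v
    by (simp add: quad_form_mat_mult)
  then show ?thesis
    by (simp add: G_set_def quadric_planes_def)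
qed

lemma orbit_code_C_eq_Union: "orbit_code_C A = (\<Union>i. G_set A i)"
proof -
  have "G_set A i \<subseteq> orbit_code_C A" for i
  proof -
    have "i mod (CARD('a)^2 + CARD('a) + 1) \<in> {0..CARD('a)^2 + CARD('a)}"
      by (simp add: less_Suc_eq_le)
    moreover have "G_set A i = G_set A (i mod (CARD('a)^2 + CARD('a) + 1))"
      by (rule G_set_cong) (simp add: cong_def)
    ultimately show ?thesis
      unfolding orbit_code_C_def by blast
  qed
  then show ?thesis
    unfolding orbit_code_C_def by blast
qed

lemma singer_block_image_G_set:
  assumes "S \<in> G_set A (a + i + b)"
  shows "(\<lambda>v. v v* singer_block A a b) ` S \<in> G_set A i"
proof (rule image_G_set[OF invertible_singer_block _ _ quad_form_singer_block assms])
  show "v v* singer_block A a b \<in> pi1 \<longleftrightarrow> v \<in> pi1" for v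
    using inj_vector_matrix[OF invertible_mpow, of a]
    by (simp add: pi1_def xpart_singer_block) (metis injD vector_matrix_mult_0)
  show "v v* singer_block A a b \<in> pi2 \<longleftrightarrow> v \<in> pi2" for v
    using inj_matrix_vector_mult[OF invertible_mpow, of b]
    by (simp add: pi2_def ypart_singer_block) (metis injD matrix_vector_mult_0_right)
qed

lemma singer_block_image_in_orbit_code:
  assumes "S \<in> orbit_code_C A"
  shows "(\<lambda>v. v v* singer_block A a b) ` S \<in> orbit_code_C A"
proof -
  obtain i where i: "S \<in> G_set A i"
    using assms unfolding orbit_code_C_eq_Union by blast
  let ?i' = "i + (CARD('a)^2 + CARD('a)) * (a + b)"
  have "a + ?i' + b = i + (CARD('a)^2 + CARD('a) + 1) * (a + b)"
    by (simp add: algebra_simps)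
  then have "G_set A (a + ?i' + b) = G_set A i"
    by (simp only:) (rule G_set_cong, simp only: cong_def mod_mult_self2)
  with i have "S \<in> G_set A (a + ?i' + b)"
    by simp
  then have "(\<lambda>v. v v* singer_block A a b) ` S \<in> G_set A ?i'"
    by (rule singer_block_image_G_set)
  then show ?thesis
    unfolding orbit_code_C_eq_Union by blast
qed

lemma singer_block_image_orbit_code:
  "(\<lambda>S. (\<lambda>v. v v* singer_block A a b) ` S) ` orbit_code_C A = orbit_code_C A"
proof
  show "(\<lambda>S. (\<lambda>v. v v* singer_block A a b) ` S) ` orbit_code_C A \<subseteq> orbit_code_C A"
    using singer_block_image_in_orbit_code by blast
  let ?a' = "a * (CARD('a)^3 - 2)" and ?b' = "b * (CARD('a)^3 - 2)"
  show "orbit_code_C A \<subseteq> (\<lambda>S. (\<lambda>v. v v* singer_block A a b) ` S) ` orbit_code_C A"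
  proof
    fix T assume "T \<in> orbit_code_C A"
    then have "(\<lambda>v. v v* singer_block A ?a' ?b') ` T \<in> orbit_code_C A"
      by (rule singer_block_image_in_orbit_code)
    moreover have "T = (\<lambda>v. v v* singer_block A a b) ` ((\<lambda>v. v v* singer_block A ?a' ?b') ` T)"
      by (simp add: image_image vector_matrix_mul_assoc singer_block_inverse)
    ultimately show "T \<in> (\<lambda>S. (\<lambda>v. v v* singer_block A a b) ` S) ` orbit_code_C A"
      by (rule rev_image_eqI)
  qed
qed

lemma alternating_congruent_mpow:
  assumes "alternating K1" "K1 \<noteq> 0" "alternating K2" "K2 \<noteq> 0"
  obtains b c where "c \<noteq> 0" "K1 = mat c ** (transpose (mpow A b) ** K2 ** mpow A b)"
proof -
  obtain k1 where k1: "k1 \<noteq> 0" "k1 v* K1 = 0"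
    using alternating_3_kernel[OF assms(1,2)] by blast
  obtain k2 where k2: "k2 \<noteq> 0" "k2 v* K2 = 0"
    using alternating_3_kernel[OF assms(3,4)] by blast
  obtain b where b: "mpow A b *v k1 = k2"
    using mpow_transitive_on_nonzero[OF k1(1) k2(1)] by blast
  define P where "P = transpose (mpow A b)"
  have P: "invertible P" "transpose P = mpow A b" "k1 v* P = k2"
    using invertible_transpose[OF invertible_mpow] b by (simp_all add: P_def)
  define K where "K = P ** K2 ** transpose P"
  have "alternating K"
    unfolding K_def by (rule alternating_congruence[OF assms(3)])
  moreover have "K \<noteq> 0"
  proof
    assume "K = 0"
    then have "P ** K2 ** mpow A b = P ** 0 ** mpow A b"
      by (simp add: K_def P(2))
    then show False
      using assms(4) invertible_left_cancel[OF P(1)] invertible_right_cancel[OF invertible_mpow] by metis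
  qed
  moreover have "k1 v* K = 0"
    using k2(2) by (simp add: K_def P(3) flip: vector_matrix_mul_assoc)
  ultimately obtain c where c: "K1 = mat c ** K"
    using alternating_3_common_kernel[OF assms(1) _ _ k1] by blast
  moreover from c assms(2) have "c \<noteq> 0"
    by auto
  moreover have "K = transpose (mpow A b) ** K2 ** mpow A b"
    by (simp add: K_def P_def)
  ultimately show ?thesis
    using that by simp
qed

lemma singer_block_transitive:
  assumes S: "S \<in> G_set A i" and T: "T \<in> G_set A j"
  obtains a b where "(\<lambda>v. v v* singer_block A a b) ` S = T"
proof -
  obtain C1 where S_graph: "S = graph_plane C1" and "C1 \<noteq> 0"
    and alt1: "alternating (C1 ** mpow A i)"
    using G_set_graph_plane[OF S] by blast
  obtain C2 where T_graph: "T = graph_plane C2" and "C2 \<noteq> 0"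
    and alt2: "alternating (C2 ** mpow A j)"
    using G_set_graph_plane[OF T] by blast
  have K1: "C1 ** mpow A i \<noteq> 0" and K2: "C2 ** mpow A j \<noteq> 0"
    using \<open>C1 \<noteq> 0\<close> \<open>C2 \<noteq> 0\<close> invertible_right_cancel[OF invertible_mpow] by (metis times0_left)+
  obtain b c where "c \<noteq> 0"
    and c: "C1 ** mpow A i = mat c ** (transpose (mpow A b) ** (C2 ** mpow A j) ** mpow A b)"
    by (rule alternating_congruent_mpow[OF alt1 K1 alt2 K2])
  from \<open>c \<noteq> 0\<close> obtain t where t: "mpow A t = mat (inverse c)"
    by (metis mat_eq_mpow inverse_nonzero_iff_nonzero)
  \<comment> \<open>\<open>a\<close> is chosen so that \<open>a + j + b \<equiv> t + i\<close> modulo the order of \<open>A\<close>\<close>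
  define a where "a = t + i + (CARD('a)^3 - 2) * (j + b)"
  let ?P = "transpose (mpow A b)"
  have PC: "?P ** C2 = C1 ** mpow A a"
  proof (rule invertible_right_cancel[OF invertible_mpow[of "j + b"]])
    have "(?P ** C2) ** mpow A (j + b) = ?P ** (C2 ** mpow A j) ** mpow A b"
      by (simp add: mpow_add matrix_mul_assoc)
    also have "\<dots> = mat (inverse c) ** (C1 ** mpow A i)"
      using c \<open>c \<noteq> 0\<close> by (simp add: mat_inverse_cancel)
    also have "\<dots> = C1 ** (mat (inverse c) ** mpow A i)"
      by (simp only: matrix_mul_assoc mat_commute)
    also have "\<dots> = C1 ** mpow A (t + i)"
      by (simp only: t mpow_add)
    also have "\<dots> = (C1 ** mpow A a) ** mpow A (j + b)"
      by (simp only: a_def mpow_pred_order flip: matrix_mul_assoc)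
    finally show "(?P ** C2) ** mpow A (j + b) = (C1 ** mpow A a) ** mpow A (j + b)" .
  qed
  have "(\<lambda>v. v v* singer_block A a b) ` S = T"
    unfolding S_graph T_graph singer_block_def
    by (rule image_graph_plane_block_diag[OF PC invertible_transpose[OF invertible_mpow]])
  then show ?thesis
    by (rule that)
qed

lemma singer_group_preserves_orbit_code:
  assumes "X \<in> singer_group A"
  shows "pgl_act X ` orbit_code_C A = orbit_code_C A"
proof -
  obtain a b where X: "X = proj_class (singer_block A a b)"
    using assms by (auto simp: singer_group_def)
  have "pgl_act X ` orbit_code_C A = (\<lambda>S. (\<lambda>v. v v* singer_block A a b) ` S) ` orbit_code_C A"
    unfolding X by (rule image_cong[OF refl pgl_act_proj_class[OF subspace_orbit_code_C]])
  then show ?thesis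
    by (simp add: singer_block_image_orbit_code)
qed

lemma singer_group_transitive:
  assumes S: "S \<in> orbit_code_C A" and T: "T \<in> orbit_code_C A"
  obtains X where "X \<in> singer_group A" "pgl_act X S = T"
proof -
  obtain i j where "S \<in> G_set A i" "T \<in> G_set A j"
    using S T by (auto simp: orbit_code_C_def)
  then obtain a b where "(\<lambda>v. v v* singer_block A a b) ` S = T"
    by (rule singer_block_transitive)
  then have "pgl_act (proj_class (singer_block A a b)) S = T"
    using pgl_act_proj_class[OF subspace_orbit_code_C[OF S]] by simp
  moreover have "proj_class (singer_block A a b) \<in> singer_group A"
    unfolding singer_group_def by blast
  ultimately show ?thesis
    using that by blast
qed

end

theorem corollary4p9:
  fixes A :: "'a::{finite,field}^3^3"
  assumes "singer_cycle A"
  shows "\<exists>H. subgroup H PGL6 \<and>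
           card H = (CARD('a)^3 - 1) * (CARD('a)^2 + CARD('a) + 1) \<and>
           (\<forall>X\<in>H. pgl_act X ` orbit_code_C A = orbit_code_C A) \<and>
           (\<forall>S\<in>orbit_code_C A. \<forall>T\<in>orbit_code_C A. \<exists>X\<in>H. pgl_act X S = T)"
proof -
  interpret singer A
    using assms by (rule singer.intro)
  show ?thesis
    using subgroup_singer_group card_singer_group singer_group_preserves_orbit_code
      singer_group_transitive by metis
qed

end
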